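(* Let $R$ be a commutative ring, $M$ an $R$-module having at least one prime submodule, $X=\mathrm{Spec}(M)$, and $N$ an $R$-module. For each $P\in X$, the stalk $\mathcal{A}(N,M)_P=\varinjlim_{P\in U}\mathcal{A}(N,M)(U)$ is isomorphic to $N_{\mathfrak p}$, where $\mathfrak p=(P:M)$.
   Context: For a submodule $L$ of an $R$-module $M$, $(L:M)=\{r\in R\mid rM\subseteq L\}$. A submodule $P$ of $M$ is prime if $P\neq M$ and whenever $rm\in P$ ($r\in R$, $m\in M$) then $r\in (P:M)$ or $m\in P$; then $(P:M)$ is a prime ideal. $\mathrm{Spec}(M)$ is the set of prime submodules. For $L\le M$, $V(L)=\{P\in X\mid (P:M)\supseteq (L:M)\}$; these are the closed sets of the Zariski topology on $X$. For open $U\subseteq X$, $\mathrm{Supp}(U)=\{(P:M)\mid P\in U\}$. The sheaf $\mathcal{A}(N,M)$ on $X$: $\mathcal{A}(N,M)(U)$ is the set of families $(\gamma_{\mathfrak p})_{\mathfrak p\in\mathrm{Supp}(U)}\in\prod_{\mathfrak p\in\mathrm{Supp}(U)}N_{\mathfrak p}$ such that for each $Q\in U$ there exist an open neighbourhood $W\subseteq U$ of $Q$ and $s\in R$, $m\in N$ with $s\notin (P:M)$ and $\gamma_{(P:M)}=m/s\in N_{(P:M)}$ for every $P\in W$; restriction maps restrict families, and $\mathcal{A}(N,M)(\emptyset)=0$. *)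

theory Defs
  imports Main "HOL.Modules"
begin

text \<open>R is the type 'r (a commutative ring with 1); an R-module is an abelian group type
  with a scalar multiplication sc satisfying the locale module sc (HOL.Modules).\<close>

definition colon :: "('r::comm_ring_1 \<Rightarrow> 'm::ab_group_add \<Rightarrow> 'm) \<Rightarrow> 'm set \<Rightarrow> 'r set" where
  "colon sc L = {r. \<forall>m. sc r m \<in> L}"

definition prime_submodule :: "('r::comm_ring_1 \<Rightarrow> 'm::ab_group_add \<Rightarrow> 'm) \<Rightarrow> 'm set \<Rightarrow> bool" where
  "prime_submodule sc P \<longleftrightarrow> module.subspace sc P \<and> P \<noteq> UNIV \<and>
     (\<forall>r m. sc r m \<in> P \<longrightarrow> r \<in> colon sc P \<or> m \<in> P)"

definition Spec :: "('r::comm_ring_1 \<Rightarrow> 'm::ab_group_add \<Rightarrow> 'm) \<Rightarrow> 'm set set" where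
  "Spec sc = {P. prime_submodule sc P}"

definition zV :: "('r::comm_ring_1 \<Rightarrow> 'm::ab_group_add \<Rightarrow> 'm) \<Rightarrow> 'm set \<Rightarrow> 'm set set" where
  "zV sc L = {P \<in> Spec sc. colon sc L \<subseteq> colon sc P}"

definition zopen :: "('r::comm_ring_1 \<Rightarrow> 'm::ab_group_add \<Rightarrow> 'm) \<Rightarrow> 'm set set \<Rightarrow> bool" where
  "zopen sc U \<longleftrightarrow> (\<exists>L. module.subspace sc L \<and> U = Spec sc - zV sc L)"

definition Supp :: "('r::comm_ring_1 \<Rightarrow> 'm::ab_group_add \<Rightarrow> 'm) \<Rightarrow> 'm set set \<Rightarrow> 'r set set" where
  "Supp sc U = (\<lambda>P. colon sc P) ` U"

definition loc_rel :: "('r::comm_ring_1 \<Rightarrow> 'n::ab_group_add \<Rightarrow> 'n) \<Rightarrow> 'r set \<Rightarrow> (('n \<times> 'r) \<times> ('n \<times> 'r)) set" where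
  "loc_rel scN p = {((n, s), (n', s')). s \<notin> p \<and> s' \<notin> p \<and>
      (\<exists>t. t \<notin> p \<and> scN t (scN s' n - scN s n') = 0)}"

definition Loc :: "('r::comm_ring_1 \<Rightarrow> 'n::ab_group_add \<Rightarrow> 'n) \<Rightarrow> 'r set \<Rightarrow> ('n \<times> 'r) set set" where
  "Loc scN p = {(n, s). s \<notin> p} // loc_rel scN p"

definition frac :: "('r::comm_ring_1 \<Rightarrow> 'n::ab_group_add \<Rightarrow> 'n) \<Rightarrow> 'r set \<Rightarrow> 'n \<Rightarrow> 'r \<Rightarrow> ('n \<times> 'r) set" where
  "frac scN p n s = loc_rel scN p `` {(n, s)}"

definition loc_add :: "('r::comm_ring_1 \<Rightarrow> 'n::ab_group_add \<Rightarrow> 'n) \<Rightarrow> 'r set \<Rightarrow>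
    ('n \<times> 'r) set \<Rightarrow> ('n \<times> 'r) set \<Rightarrow> ('n \<times> 'r) set" where
  "loc_add scN p a b = (let x = (SOME x. x \<in> a); y = (SOME y. y \<in> b) in
     frac scN p (scN (snd y) (fst x) + scN (snd x) (fst y)) (snd x * snd y))"

definition loc_smul :: "('r::comm_ring_1 \<Rightarrow> 'n::ab_group_add \<Rightarrow> 'n) \<Rightarrow> 'r set \<Rightarrow>
    'r \<Rightarrow> ('n \<times> 'r) set \<Rightarrow> ('n \<times> 'r) set" where
  "loc_smul scN p r a = (let x = (SOME x. x \<in> a) in frac scN p (scN r (fst x)) (snd x))"

text \<open>A section over U is a family indexed by Supp(U); outside Supp(U) it is set to the empty set
  (which is never an element of N_p), so families correspond to functions on Supp(U).\<close>
definition sections :: "('r::comm_ring_1 \<Rightarrow> 'm::ab_group_add \<Rightarrow> 'm) \<Rightarrow>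
    ('r \<Rightarrow> 'n::ab_group_add \<Rightarrow> 'n) \<Rightarrow> 'm set set \<Rightarrow> ('r set \<Rightarrow> ('n \<times> 'r) set) set" where
  "sections scM scN U = {\<gamma>.
     (\<forall>p. p \<notin> Supp scM U \<longrightarrow> \<gamma> p = {}) \<and>
     (\<forall>p \<in> Supp scM U. \<gamma> p \<in> Loc scN p) \<and>
     (\<forall>Q \<in> U. \<exists>W s m. zopen scM W \<and> W \<subseteq> U \<and> Q \<in> W \<and>
        (\<forall>P \<in> W. s \<notin> colon scM P \<and> \<gamma> (colon scM P) = frac scN (colon scM P) m s))}"

definition restr :: "('r::comm_ring_1 \<Rightarrow> 'm::ab_group_add \<Rightarrow> 'm) \<Rightarrow> 'm set set \<Rightarrow>
    ('r set \<Rightarrow> ('n \<times> 'r) set) \<Rightarrow> ('r set \<Rightarrow> ('n \<times> 'r) set)" where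
  "restr scM W \<gamma> = (\<lambda>p. if p \<in> Supp scM W then \<gamma> p else {})"

definition sec_add :: "('r::comm_ring_1 \<Rightarrow> 'm::ab_group_add \<Rightarrow> 'm) \<Rightarrow> ('r \<Rightarrow> 'n::ab_group_add \<Rightarrow> 'n) \<Rightarrow>
    'm set set \<Rightarrow> ('r set \<Rightarrow> ('n \<times> 'r) set) \<Rightarrow> ('r set \<Rightarrow> ('n \<times> 'r) set) \<Rightarrow> ('r set \<Rightarrow> ('n \<times> 'r) set)" where
  "sec_add scM scN U \<gamma> \<delta> = (\<lambda>p. if p \<in> Supp scM U then loc_add scN p (\<gamma> p) (\<delta> p) else {})"

definition sec_smul :: "('r::comm_ring_1 \<Rightarrow> 'm::ab_group_add \<Rightarrow> 'm) \<Rightarrow> ('r \<Rightarrow> 'n::ab_group_add \<Rightarrow> 'n) \<Rightarrow>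
    'm set set \<Rightarrow> 'r \<Rightarrow> ('r set \<Rightarrow> ('n \<times> 'r) set) \<Rightarrow> ('r set \<Rightarrow> ('n \<times> 'r) set)" where
  "sec_smul scM scN U r \<gamma> = (\<lambda>p. if p \<in> Supp scM U then loc_smul scN p r (\<gamma> p) else {})"

definition germ_reps :: "('r::comm_ring_1 \<Rightarrow> 'm::ab_group_add \<Rightarrow> 'm) \<Rightarrow> ('r \<Rightarrow> 'n::ab_group_add \<Rightarrow> 'n) \<Rightarrow>
    'm set \<Rightarrow> ('m set set \<times> ('r set \<Rightarrow> ('n \<times> 'r) set)) set" where
  "germ_reps scM scN P = {(U, \<gamma>). zopen scM U \<and> P \<in> U \<and> \<gamma> \<in> sections scM scN U}"

definition germ_rel :: "('r::comm_ring_1 \<Rightarrow> 'm::ab_group_add \<Rightarrow> 'm) \<Rightarrow> ('r \<Rightarrow> 'n::ab_group_add \<Rightarrow> 'n) \<Rightarrow>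
    'm set \<Rightarrow> (('m set set \<times> ('r set \<Rightarrow> ('n \<times> 'r) set)) \<times> ('m set set \<times> ('r set \<Rightarrow> ('n \<times> 'r) set))) set" where
  "germ_rel scM scN P = {((U, \<gamma>), (V, \<delta>)). (U, \<gamma>) \<in> germ_reps scM scN P \<and> (V, \<delta>) \<in> germ_reps scM scN P \<and>
      (\<exists>W. zopen scM W \<and> P \<in> W \<and> W \<subseteq> U \<inter> V \<and> restr scM W \<gamma> = restr scM W \<delta>)}"

definition stalk :: "('r::comm_ring_1 \<Rightarrow> 'm::ab_group_add \<Rightarrow> 'm) \<Rightarrow> ('r \<Rightarrow> 'n::ab_group_add \<Rightarrow> 'n) \<Rightarrow>
    'm set \<Rightarrow> ('m set set \<times> ('r set \<Rightarrow> ('n \<times> 'r) set)) set set" where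
  "stalk scM scN P = germ_reps scM scN P // germ_rel scM scN P"

definition stalk_add :: "('r::comm_ring_1 \<Rightarrow> 'm::ab_group_add \<Rightarrow> 'm) \<Rightarrow> ('r \<Rightarrow> 'n::ab_group_add \<Rightarrow> 'n) \<Rightarrow>
    'm set \<Rightarrow> ('m set set \<times> ('r set \<Rightarrow> ('n \<times> 'r) set)) set \<Rightarrow> ('m set set \<times> ('r set \<Rightarrow> ('n \<times> 'r) set)) set
    \<Rightarrow> ('m set set \<times> ('r set \<Rightarrow> ('n \<times> 'r) set)) set" where
  "stalk_add scM scN P a b = (let (U, \<gamma>) = (SOME x. x \<in> a); (V, \<delta>) = (SOME y. y \<in> b) in
     germ_rel scM scN P `` {(U \<inter> V, sec_add scM scN (U \<inter> V) (restr scM (U \<inter> V) \<gamma>) (restr scM (U \<inter> V) \<delta>))})"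

definition stalk_smul :: "('r::comm_ring_1 \<Rightarrow> 'm::ab_group_add \<Rightarrow> 'm) \<Rightarrow> ('r \<Rightarrow> 'n::ab_group_add \<Rightarrow> 'n) \<Rightarrow>
    'm set \<Rightarrow> 'r \<Rightarrow> ('m set set \<times> ('r set \<Rightarrow> ('n \<times> 'r) set)) set
    \<Rightarrow> ('m set set \<times> ('r set \<Rightarrow> ('n \<times> 'r) set)) set" where
  "stalk_smul scM scN P r a = (let (U, \<gamma>) = (SOME x. x \<in> a) in
     germ_rel scM scN P `` {(U, sec_smul scM scN U r \<gamma>)})"

end

theory Submission
  imports Defs
begin

text \<open>A germ at P is represented by a section \<gamma> over an open U \<ni> P, and it is sent to its value
  \<gamma>(\<pp>) \<in> N_\<pp>, \<pp> = (P:M). This is onto because every fraction m/s with s \<notin> \<pp> defines a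
  section over the basic open set X_s = {Q. s \<notin> (Q:M)}. It is injective because two
  sections agreeing at \<pp> are near P given by fractions m/s and m'/s' with t(s'm - sm') = 0
  for some t \<notin> \<pp>, and then they agree on the open neighbourhood X_t of P. Sums and scalar
  multiples of germs are computed pointwise, so the map is linear.\<close>

lemma some_in_quotient: "equiv A r \<Longrightarrow> X \<in> A // r \<Longrightarrow> (SOME x. x \<in> X) \<in> X"
  by (metis in_quotient_imp_non_empty some_in_eq)

lemma some_in_quotient_carrier: "equiv A r \<Longrightarrow> X \<in> A // r \<Longrightarrow> (SOME x. x \<in> X) \<in> A"
  using some_in_quotient in_quotient_imp_subset by blast

lemma congruent_some_equiv_class:
  assumes "equiv A r" "a \<in> A" "\<And>x y. (x, y) \<in> r \<Longrightarrow> f x = f y"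
  shows "f (SOME x. x \<in> r `` {a}) = f a"
proof -
  have "(SOME x. x \<in> r `` {a}) \<in> r `` {a}"
    using assms(1,2) by (rule some_in_quotient[OF _ quotientI])
  then have "(a, SOME x. x \<in> r `` {a}) \<in> r" by simp
  then show ?thesis using assms(3) by metis
qed

lemma bij_betw_quotient_choice:
  assumes r: "equiv A r" and f: "\<And>x y. x \<in> A \<Longrightarrow> y \<in> A \<Longrightarrow> (x, y) \<in> r \<longleftrightarrow> f x = f y"
  shows "bij_betw (\<lambda>X. f (SOME x. x \<in> X)) (A // r) (f ` A)"
proof -
  have resp: "f x = f y" if "(x, y) \<in> r" for x y
    using that f equiv_type[OF r] by blast
  have rep_class: "f (SOME x. x \<in> r `` {a}) = f a" if "a \<in> A" for a
    using r that resp by (rule congruent_some_equiv_class)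
  show ?thesis
    unfolding bij_betw_def
  proof
    show "inj_on (\<lambda>X. f (SOME x. x \<in> X)) (A // r)"
    proof (rule inj_onI)
      fix X Y assume "X \<in> A // r" "Y \<in> A // r" "f (SOME x. x \<in> X) = f (SOME x. x \<in> Y)"
      then show "X = Y"
        by (elim quotientE) (use rep_class f equiv_class_eq[OF r] in auto)
    qed
    have "(\<lambda>X. f (SOME x. x \<in> X)) ` (A // r) = (\<lambda>a. f (SOME x. x \<in> r `` {a})) ` A"
      by (simp only: proj_image[symmetric] image_image proj_def)
    also have "\<dots> = f ` A"
      using rep_class by (rule image_cong[OF refl])
    finally show "(\<lambda>X. f (SOME x. x \<in> X)) ` (A // r) = f ` A" .
  qed
qed

subsection \<open>Localization\<close>

text \<open>The only property of a prime ideal \<pp> that the localization N_\<pp> needs.\<close>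
definition mult_closed_compl :: "'a::comm_ring_1 set \<Rightarrow> bool" where
  "mult_closed_compl p \<longleftrightarrow> 1 \<notin> p \<and> (\<forall>a b. a \<notin> p \<longrightarrow> b \<notin> p \<longrightarrow> a * b \<notin> p)"

lemma mult_closed_complD: "mult_closed_compl p \<Longrightarrow> a \<notin> p \<Longrightarrow> b \<notin> p \<Longrightarrow> a * b \<notin> p"
  by (simp add: mult_closed_compl_def)

lemma frac_in_Loc: "s \<notin> p \<Longrightarrow> frac scN p m s \<in> Loc scN p"
  unfolding frac_def Loc_def by (rule quotientI) simp

lemma Loc_fracE:
  assumes "A \<in> Loc scN p"
  obtains m s where "s \<notin> p" "A = frac scN p m s"
  using assms unfolding frac_def Loc_def by (auto elim!: quotientE)

context module
begin

lemma loc_rel_iff: "((m, s), (m', s')) \<in> loc_rel scale p \<longleftrightarrow>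
    s \<notin> p \<and> s' \<notin> p \<and> (\<exists>t. t \<notin> p \<and> t *s (s' *s m - s *s m') = 0)"
  by (simp add: loc_rel_def)

lemma loc_rel_equiv:
  assumes "mult_closed_compl p"
  shows "equiv {(n, s). s \<notin> p} (loc_rel scale p)"
proof (rule equivI)
  show "loc_rel scale p \<subseteq> {(n, s). s \<notin> p} \<times> {(n, s). s \<notin> p}"
    by (auto simp: loc_rel_def)
  show "refl_on {(n, s). s \<notin> p} (loc_rel scale p)"
    using assms by (auto simp: refl_on_def loc_rel_iff mult_closed_compl_def intro!: exI[of _ 1])
  show "sym (loc_rel scale p)"
  proof (rule symI, clarify)
    fix m s m' s' assume "((m, s), (m', s')) \<in> loc_rel scale p"
    moreover have "t *s (s *s m' - s' *s m) = - (t *s (s' *s m - s *s m'))" for t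
      by (metis minus_diff_eq scale_minus_right)
    ultimately show "((m', s'), (m, s)) \<in> loc_rel scale p"
      by (auto simp: loc_rel_iff)
  qed
  show "trans (loc_rel scale p)"
  proof (rule transI, clarify)
    fix m s m' s' m'' s''
    assume "((m, s), (m', s')) \<in> loc_rel scale p" "((m', s'), (m'', s'')) \<in> loc_rel scale p"
    then obtain t t' where h: "s \<notin> p" "s' \<notin> p" "s'' \<notin> p" "t \<notin> p" "t' \<notin> p"
      "t *s (s' *s m - s *s m') = 0" "t' *s (s'' *s m' - s' *s m'') = 0"
      by (auto simp: loc_rel_iff)
    have "(t * t' * s') *s (s'' *s m - s *s m'') =
        (t' * s'') *s (t *s (s' *s m - s *s m')) + (t * s) *s (t' *s (s'' *s m' - s' *s m''))"
      by (simp only: scale_right_diff_distrib scale_scale) (simp add: mult_ac)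
    also have "\<dots> = 0" using h by simp
    finally have "(t * t' * s') *s (s'' *s m - s *s m'') = 0" .
    moreover have "t * t' * s' \<notin> p" using assms h by (simp add: mult_closed_complD)
    ultimately show "((m, s), (m'', s'')) \<in> loc_rel scale p" using h by (auto simp: loc_rel_iff)
  qed
qed

lemma frac_eq_iff:
  assumes "mult_closed_compl p" "s \<notin> p" "s' \<notin> p"
  shows "frac scale p m s = frac scale p m' s' \<longleftrightarrow> (\<exists>t. t \<notin> p \<and> t *s (s' *s m - s *s m') = 0)"
proof -
  have "frac scale p m s = frac scale p m' s' \<longleftrightarrow> ((m, s), (m', s')) \<in> loc_rel scale p"
    unfolding frac_def by (rule eq_equiv_class_iff[OF loc_rel_equiv[OF assms(1)]]) (use assms in auto)
  then show ?thesis using assms by (simp add: loc_rel_iff)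
qed

lemma some_in_frac:
  assumes "mult_closed_compl p" "s \<notin> p"
  obtains m' s' where "(SOME x. x \<in> frac scale p m s) = (m', s')" "s' \<notin> p"
    "\<exists>t. t \<notin> p \<and> t *s (s' *s m - s *s m') = 0"
proof -
  have "(SOME x. x \<in> frac scale p m s) \<in> frac scale p m s"
    unfolding frac_def using loc_rel_equiv[OF assms(1)] by (rule some_in_quotient[OF _ quotientI]) (use assms in simp)
  then show ?thesis
    using that loc_rel_equiv[OF assms(1)]
    by (cases "SOME x. x \<in> frac scale p m s") (auto simp: frac_def loc_rel_iff)
qed

lemma loc_smul_frac:
  assumes "mult_closed_compl p" "s \<notin> p"
  shows "loc_smul scale p r (frac scale p m s) = frac scale p (r *s m) s"
proof -
  obtain m' s' t where x: "(SOME x. x \<in> frac scale p m s) = (m', s')" "s' \<notin> p"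
    and t: "t \<notin> p" "t *s (s' *s m - s *s m') = 0"
    using some_in_frac[OF assms] by metis
  have "t *s (s' *s (r *s m) - s *s (r *s m')) = r *s (t *s (s' *s m - s *s m'))"
    by (simp add: scale_right_diff_distrib mult_ac)
  also have "\<dots> = 0" using t by simp
  finally have "frac scale p (r *s m) s = frac scale p (r *s m') s'"
    using frac_eq_iff[OF assms x(2)] t(1) by blast
  then show ?thesis unfolding loc_smul_def Let_def x(1) by simp
qed

lemma loc_add_frac:
  assumes p: "mult_closed_compl p" and "s \<notin> p" "s' \<notin> p"
  shows "loc_add scale p (frac scale p m s) (frac scale p m' s') =
    frac scale p (s' *s m + s *s m') (s * s')"
proof -
  obtain x1 x2 t where x: "(SOME x. x \<in> frac scale p m s) = (x1, x2)" "x2 \<notin> p"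
    and t: "t \<notin> p" "t *s (x2 *s m - s *s x1) = 0"
    using some_in_frac[OF p \<open>s \<notin> p\<close>] by metis
  obtain y1 y2 t' where y: "(SOME x. x \<in> frac scale p m' s') = (y1, y2)" "y2 \<notin> p"
    and t': "t' \<notin> p" "t' *s (y2 *s m' - s' *s y1) = 0"
    using some_in_frac[OF p \<open>s' \<notin> p\<close>] by metis
  have "(t * t') *s ((x2 * y2) *s (s' *s m + s *s m') - (s * s') *s (y2 *s x1 + x2 *s y1))
      = (t' * s' * y2) *s (t *s (x2 *s m - s *s x1)) + (t * s * x2) *s (t' *s (y2 *s m' - s' *s y1))"
    by (simp only: scale_right_diff_distrib scale_right_distrib scale_scale) (simp add: mult_ac)
  also have "\<dots> = 0" using t t' by simp
  finally have "(t * t') *s ((x2 * y2) *s (s' *s m + s *s m') - (s * s') *s (y2 *s x1 + x2 *s y1)) = 0" .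
  moreover have "t * t' \<notin> p" "x2 * y2 \<notin> p" "s * s' \<notin> p"
    using p t t' x y assms by (simp_all add: mult_closed_complD)
  ultimately have "frac scale p (s' *s m + s *s m') (s * s') = frac scale p (y2 *s x1 + x2 *s y1) (x2 * y2)"
    using frac_eq_iff[OF p] by blast
  then show ?thesis unfolding loc_add_def Let_def x(1) y(1) by simp
qed

end

subsection \<open>Prime submodules and the Zariski topology\<close>

definition basic_open :: "('r::comm_ring_1 \<Rightarrow> 'm::ab_group_add \<Rightarrow> 'm) \<Rightarrow> 'r \<Rightarrow> 'm set set" where
  "basic_open sc t = Spec sc - zV sc (range (sc t))"

context module
begin

lemma colon_Spec_mult_closed_compl:
  assumes "Q \<in> Spec scale"
  shows "mult_closed_compl (colon scale Q)"
proof -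
  have Q: "Q \<noteq> UNIV" "\<And>r m. r *s m \<in> Q \<Longrightarrow> r \<in> colon scale Q \<or> m \<in> Q"
    using assms by (auto simp: Spec_def prime_submodule_def)
  have "a * b \<notin> colon scale Q" if a: "a \<notin> colon scale Q" and b: "b \<notin> colon scale Q" for a b
  proof
    assume "a * b \<in> colon scale Q"
    moreover obtain m where "b *s m \<notin> Q" using b by (auto simp: colon_def)
    ultimately show False using Q(2)[of a "b *s m"] a by (simp add: colon_def)
  qed
  moreover have "1 \<notin> colon scale Q" using Q(1) by (auto simp: colon_def)
  ultimately show ?thesis by (auto simp: mult_closed_compl_def)
qed

lemma mult_mem_colon: "subspace L \<Longrightarrow> a \<in> colon scale L \<Longrightarrow> b * a \<in> colon scale L"
  by (auto simp: colon_def simp flip: scale_scale intro: subspace_scale)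

lemma zopen_subset_Spec: "zopen scale U \<Longrightarrow> U \<subseteq> Spec scale"
  unfolding zopen_def by auto

lemma colon_Int_le_Spec_iff:
  assumes "subspace L1" "subspace L2" "Q \<in> Spec scale"
  shows "colon scale (L1 \<inter> L2) \<subseteq> colon scale Q \<longleftrightarrow>
    colon scale L1 \<subseteq> colon scale Q \<or> colon scale L2 \<subseteq> colon scale Q"
proof
  assume le: "colon scale (L1 \<inter> L2) \<subseteq> colon scale Q"
  show "colon scale L1 \<subseteq> colon scale Q \<or> colon scale L2 \<subseteq> colon scale Q"
  proof (rule ccontr)
    assume "\<not> ?thesis"
    then obtain a b where ab: "a \<in> colon scale L1" "a \<notin> colon scale Q"
      "b \<in> colon scale L2" "b \<notin> colon scale Q"
      by auto
    have "b * a \<in> colon scale L1" "a * b \<in> colon scale L2"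
      using mult_mem_colon assms(1,2) ab by blast+
    then have "a * b \<in> colon scale Q" using le by (auto simp: colon_def mult.commute)
    then show False
      using colon_Spec_mult_closed_compl[OF assms(3)] ab by (auto dest: mult_closed_complD)
  qed
qed (auto simp: colon_def)

lemma zopen_Int:
  assumes "zopen scale U" "zopen scale V"
  shows "zopen scale (U \<inter> V)"
proof -
  obtain L1 L2 where L: "subspace L1" "subspace L2"
    "U = Spec scale - zV scale L1" "V = Spec scale - zV scale L2"
    using assms unfolding zopen_def by blast
  have "U \<inter> V = Spec scale - zV scale (L1 \<inter> L2)"
    unfolding L(3,4) zV_def using colon_Int_le_Spec_iff[OF L(1,2)] by blast
  moreover have "subspace (L1 \<inter> L2)" using L(1,2) by (auto simp: subspace_def)
  ultimately show ?thesis unfolding zopen_def by blast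
qed

lemma subspace_range_scale: "subspace (range (scale t))"
  unfolding subspace_def
proof (intro conjI ballI allI)
  show "0 \<in> range (scale t)" by (metis scale_zero_right rangeI)
  show "x + y \<in> range (scale t)" if "x \<in> range (scale t)" "y \<in> range (scale t)" for x y
    using that by (auto simp flip: scale_right_distrib)
  show "c *s x \<in> range (scale t)" if "x \<in> range (scale t)" for c x
    using that by (auto simp: mult.commute intro: range_eqI[of _ _ "c *s _"])
qed

lemma zopen_basic_open: "zopen scale (basic_open scale t)"
  unfolding zopen_def basic_open_def using subspace_range_scale by blast

lemma mem_basic_open_iff: "Q \<in> basic_open scale t \<longleftrightarrow> Q \<in> Spec scale \<and> t \<notin> colon scale Q"
proof -
  have "colon scale (range (scale t)) \<subseteq> colon scale Q \<longleftrightarrow> t \<in> colon scale Q"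
  proof
    assume "colon scale (range (scale t)) \<subseteq> colon scale Q"
    moreover have "t \<in> colon scale (range (scale t))" by (auto simp: colon_def)
    ultimately show "t \<in> colon scale Q" by blast
  next
    assume "t \<in> colon scale Q"
    then show "colon scale (range (scale t)) \<subseteq> colon scale Q"
      by (auto simp: colon_def) (metis rangeE)
  qed
  then show ?thesis by (auto simp: basic_open_def zV_def)
qed

end

definition frac_on :: "('r::comm_ring_1 \<Rightarrow> 'm::ab_group_add \<Rightarrow> 'm) \<Rightarrow> ('r \<Rightarrow> 'n::ab_group_add \<Rightarrow> 'n) \<Rightarrow>
    'm set set \<Rightarrow> 'n \<Rightarrow> 'r \<Rightarrow> ('r set \<Rightarrow> ('n \<times> 'r) set) \<Rightarrow> bool" where
  "frac_on scM scN W m s \<gamma> \<longleftrightarrow>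
    (\<forall>Q \<in> W. s \<notin> colon scM Q \<and> \<gamma> (colon scM Q) = frac scN (colon scM Q) m s)"

lemma sections_locally_frac:
  assumes "\<gamma> \<in> sections scM scN U" "Q \<in> U"
  obtains W s m where "zopen scM W" "W \<subseteq> U" "Q \<in> W" "frac_on scM scN W m s \<gamma>"
  using assms unfolding sections_def frac_on_def by blast

text \<open>The condition \<gamma>(p) \<in> N_p of the definition of sections follows from local fractionality.\<close>
lemma sectionsI:
  assumes "\<And>p. p \<notin> Supp scM U \<Longrightarrow> \<gamma> p = {}"
    and "\<And>Q. Q \<in> U \<Longrightarrow> \<exists>W s m. zopen scM W \<and> W \<subseteq> U \<and> Q \<in> W \<and> frac_on scM scN W m s \<gamma>"
  shows "\<gamma> \<in> sections scM scN U"
proof -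
  have "\<gamma> (colon scM Q) \<in> Loc scN (colon scM Q)" if "Q \<in> U" for Q
    using assms(2)[OF that] frac_in_Loc unfolding frac_on_def by metis
  then show ?thesis
    using assms unfolding sections_def frac_on_def Supp_def by blast
qed

lemma restr_eq_mono:
  "W' \<subseteq> W \<Longrightarrow> restr scM W \<gamma> = restr scM W \<delta> \<Longrightarrow> restr scM W' \<gamma> = restr scM W' \<delta>"
  unfolding restr_def Supp_def by (metis image_mono subsetD)

subsection \<open>The stalk at a prime submodule\<close>

locale stalk_at_prime = M: module scM + N: module scN
  for scM :: "'r::comm_ring_1 \<Rightarrow> 'm::ab_group_add \<Rightarrow> 'm"
    and scN :: "'r \<Rightarrow> 'n::ab_group_add \<Rightarrow> 'n" +
  fixes P :: "'m set"
  assumes P_Spec: "P \<in> Spec scM"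
begin

abbreviation \<pp> :: "'r set" where "\<pp> \<equiv> colon scM P"

lemma colon_mem_Supp: "P \<in> U \<Longrightarrow> \<pp> \<in> Supp scM U"
  by (simp add: Supp_def)

lemma germ_rel_equiv: "equiv (germ_reps scM scN P) (germ_rel scM scN P)"
proof (rule equivI)
  show "germ_rel scM scN P \<subseteq> germ_reps scM scN P \<times> germ_reps scM scN P"
    unfolding germ_rel_def by auto
  show "refl_on (germ_reps scM scN P) (germ_rel scM scN P)"
    by (rule refl_onI) (auto simp: germ_rel_def germ_reps_def)
  show "sym (germ_rel scM scN P)"
    by (rule symI) (auto simp: germ_rel_def)
  show "trans (germ_rel scM scN P)"
  proof (rule transI, clarify)
    fix U \<gamma> V \<delta> X \<epsilon>
    assume xy: "((U, \<gamma>), (V, \<delta>)) \<in> germ_rel scM scN P"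
      and yz: "((V, \<delta>), (X, \<epsilon>)) \<in> germ_rel scM scN P"
    obtain W1 where W1: "zopen scM W1" "P \<in> W1" "W1 \<subseteq> U \<inter> V" "restr scM W1 \<gamma> = restr scM W1 \<delta>"
      using xy by (auto simp: germ_rel_def)
    obtain W2 where W2: "zopen scM W2" "P \<in> W2" "W2 \<subseteq> V \<inter> X" "restr scM W2 \<delta> = restr scM W2 \<epsilon>"
      using yz by (auto simp: germ_rel_def)
    have "restr scM (W1 \<inter> W2) \<gamma> = restr scM (W1 \<inter> W2) \<epsilon>"
      using restr_eq_mono[OF _ W1(4), of "W1 \<inter> W2"] restr_eq_mono[OF _ W2(4), of "W1 \<inter> W2"]
      by simp
    moreover have "zopen scM (W1 \<inter> W2)" "P \<in> W1 \<inter> W2" "W1 \<inter> W2 \<subseteq> U \<inter> X"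
      using M.zopen_Int[OF W1(1) W2(1)] W1(2,3) W2(2,3) by auto
    moreover have "(U, \<gamma>) \<in> germ_reps scM scN P" "(X, \<epsilon>) \<in> germ_reps scM scN P"
      using xy yz by (simp_all add: germ_rel_def)
    ultimately show "((U, \<gamma>), (X, \<epsilon>)) \<in> germ_rel scM scN P"
      unfolding germ_rel_def by blast
  qed
qed

lemma germ_rel_value_eq:
  assumes "(c, d) \<in> germ_rel scM scN P"
  shows "snd c \<pp> = snd d \<pp>"
proof -
  obtain W where "P \<in> W" "restr scM W (snd c) = restr scM W (snd d)"
    using assms by (cases c, cases d) (auto simp: germ_rel_def)
  from this(1) fun_cong[OF this(2), of \<pp>] show ?thesis
    by (simp add: restr_def colon_mem_Supp)
qed

lemma germ_rel_of_value_eq: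
  assumes c: "(U, \<gamma>) \<in> germ_reps scM scN P" and d: "(V, \<delta>) \<in> germ_reps scM scN P"
    and eq: "\<gamma> \<pp> = \<delta> \<pp>"
  shows "((U, \<gamma>), (V, \<delta>)) \<in> germ_rel scM scN P"
proof -
  obtain W1 s m where W1: "zopen scM W1" "W1 \<subseteq> U" "P \<in> W1" "frac_on scM scN W1 m s \<gamma>"
    using c by (auto simp: germ_reps_def elim: sections_locally_frac)
  obtain W2 s' m' where W2: "zopen scM W2" "W2 \<subseteq> V" "P \<in> W2" "frac_on scM scN W2 m' s' \<delta>"
    using d by (auto simp: germ_reps_def elim: sections_locally_frac)
  have s: "s \<notin> \<pp>" "s' \<notin> \<pp>" and "frac scN \<pp> m s = frac scN \<pp> m' s'"
    using eq W1(3,4) W2(3,4) by (auto simp: frac_on_def)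
  then obtain t where t: "t \<notin> \<pp>" "scN t (scN s' m - scN s m') = 0"
    using N.frac_eq_iff[OF M.colon_Spec_mult_closed_compl[OF P_Spec]] by blast
  define W where "W = W1 \<inter> W2 \<inter> basic_open scM t"
  have "zopen scM W"
    unfolding W_def by (intro M.zopen_Int M.zopen_basic_open W1(1) W2(1))
  moreover have "P \<in> W"
    unfolding W_def using W1(3) W2(3) t(1) P_Spec M.mem_basic_open_iff by blast
  moreover have "\<gamma> (colon scM Q) = \<delta> (colon scM Q)" if "Q \<in> W" for Q
  proof -
    have "Q \<in> Spec scM" "t \<notin> colon scM Q"
      using that M.mem_basic_open_iff unfolding W_def by auto
    moreover have "s \<notin> colon scM Q" "s' \<notin> colon scM Q"
      "\<gamma> (colon scM Q) = frac scN (colon scM Q) m s" "\<delta> (colon scM Q) = frac scN (colon scM Q) m' s'"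
      using that W1(4) W2(4) unfolding W_def frac_on_def by auto
    ultimately show ?thesis
      using N.frac_eq_iff[OF M.colon_Spec_mult_closed_compl] t(2) by metis
  qed
  then have "restr scM W \<gamma> = restr scM W \<delta>"
    by (intro ext) (auto simp: restr_def Supp_def)
  ultimately show ?thesis
    using c d W1(2) W2(2) unfolding germ_rel_def W_def by blast
qed

lemma germ_values: "(\<lambda>c. snd c \<pp>) ` germ_reps scM scN P = Loc scN \<pp>"
proof
  show "(\<lambda>c. snd c \<pp>) ` germ_reps scM scN P \<subseteq> Loc scN \<pp>"
    by (auto simp: germ_reps_def sections_def colon_mem_Supp)
  show "Loc scN \<pp> \<subseteq> (\<lambda>c. snd c \<pp>) ` germ_reps scM scN P"
  proof
    fix A assume "A \<in> Loc scN \<pp>"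
    then obtain m s where ms: "s \<notin> \<pp>" "A = frac scN \<pp> m s" by (rule Loc_fracE)
    define X where "X = basic_open scM s"
    define \<gamma> where "\<gamma> = (\<lambda>q. if q \<in> Supp scM X then frac scN q m s else {})"
    have "P \<in> X" unfolding X_def using P_Spec ms(1) M.mem_basic_open_iff by blast
    have "frac_on scM scN X m s \<gamma>"
      by (auto simp: frac_on_def \<gamma>_def Supp_def X_def M.mem_basic_open_iff)
    then have "\<gamma> \<in> sections scM scN X"
      using M.zopen_basic_open unfolding X_def by (intro sectionsI) (auto simp: \<gamma>_def X_def)
    moreover have "\<gamma> \<pp> = A" using \<open>P \<in> X\<close> ms(2) by (simp add: \<gamma>_def colon_mem_Supp)
    ultimately show "A \<in> (\<lambda>c. snd c \<pp>) ` germ_reps scM scN P"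
      using \<open>P \<in> X\<close> M.zopen_basic_open unfolding germ_reps_def X_def by force
  qed
qed

lemma germ_reps_add:
  assumes c: "(U, \<gamma>) \<in> germ_reps scM scN P" and d: "(V, \<delta>) \<in> germ_reps scM scN P"
  defines "\<sigma> \<equiv> sec_add scM scN (U \<inter> V) (restr scM (U \<inter> V) \<gamma>) (restr scM (U \<inter> V) \<delta>)"
  shows "(U \<inter> V, \<sigma>) \<in> germ_reps scM scN P"
proof -
  have U: "zopen scM U" "P \<in> U" "\<gamma> \<in> sections scM scN U"
    and V: "zopen scM V" "P \<in> V" "\<delta> \<in> sections scM scN V"
    using c d by (auto simp: germ_reps_def)
  have \<sigma>_at: "\<sigma> q = loc_add scN q (\<gamma> q) (\<delta> q)" if "q \<in> Supp scM (U \<inter> V)" for q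
    using that by (simp add: \<sigma>_def sec_add_def restr_def)
  have "\<sigma> \<in> sections scM scN (U \<inter> V)"
  proof (rule sectionsI)
    show "\<sigma> q = {}" if "q \<notin> Supp scM (U \<inter> V)" for q
      using that by (simp add: \<sigma>_def sec_add_def)
    fix Q assume "Q \<in> U \<inter> V"
    then obtain W1 s m W2 s' m' where W1: "zopen scM W1" "W1 \<subseteq> U" "Q \<in> W1" "frac_on scM scN W1 m s \<gamma>"
      and W2: "zopen scM W2" "W2 \<subseteq> V" "Q \<in> W2" "frac_on scM scN W2 m' s' \<delta>"
      using sections_locally_frac[OF U(3)] sections_locally_frac[OF V(3)] by (metis IntD1 IntD2)
    have "frac_on scM scN (W1 \<inter> W2) (scN s' m + scN s m') (s * s') \<sigma>"
      unfolding frac_on_def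
    proof
      fix Q' assume Q': "Q' \<in> W1 \<inter> W2"
      have p: "mult_closed_compl (colon scM Q')"
        using Q' W1(2) M.zopen_subset_Spec[OF U(1)] M.colon_Spec_mult_closed_compl by blast
      have "s \<notin> colon scM Q'" "s' \<notin> colon scM Q'"
        using Q' W1(4) W2(4) by (auto simp: frac_on_def)
      moreover have "colon scM Q' \<in> Supp scM (U \<inter> V)"
        using Q' W1(2) W2(2) by (auto simp: Supp_def)
      ultimately show "s * s' \<notin> colon scM Q' \<and>
          \<sigma> (colon scM Q') = frac scN (colon scM Q') (scN s' m + scN s m') (s * s')"
        using \<sigma>_at N.loc_add_frac[OF p] Q' W1(4) W2(4) p
        by (auto simp: frac_on_def mult_closed_complD)
    qed
    then show "\<exists>W s m. zopen scM W \<and> W \<subseteq> U \<inter> V \<and> Q \<in> W \<and> frac_on scM scN W m s \<sigma>"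
      using M.zopen_Int[OF W1(1) W2(1)] W1 W2 by blast
  qed
  then show ?thesis using U V M.zopen_Int[OF U(1) V(1)] by (simp add: germ_reps_def)
qed

lemma germ_reps_smul:
  assumes c: "(U, \<gamma>) \<in> germ_reps scM scN P"
  shows "(U, sec_smul scM scN U r \<gamma>) \<in> germ_reps scM scN P"
proof -
  have U: "zopen scM U" "P \<in> U" "\<gamma> \<in> sections scM scN U"
    using c by (auto simp: germ_reps_def)
  have "sec_smul scM scN U r \<gamma> \<in> sections scM scN U"
  proof (rule sectionsI)
    show "sec_smul scM scN U r \<gamma> q = {}" if "q \<notin> Supp scM U" for q
      using that by (simp add: sec_smul_def)
    fix Q assume "Q \<in> U"
    then obtain W s m where W: "zopen scM W" "W \<subseteq> U" "Q \<in> W" "frac_on scM scN W m s \<gamma>"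
      using sections_locally_frac[OF U(3)] by metis
    have "frac_on scM scN W (scN r m) s (sec_smul scM scN U r \<gamma>)"
      unfolding frac_on_def
    proof
      fix Q' assume Q': "Q' \<in> W"
      have p: "mult_closed_compl (colon scM Q')"
        using Q' W(2) M.zopen_subset_Spec[OF U(1)] M.colon_Spec_mult_closed_compl by blast
      moreover have "colon scM Q' \<in> Supp scM U" using Q' W(2) by (auto simp: Supp_def)
      ultimately show "s \<notin> colon scM Q' \<and> sec_smul scM scN U r \<gamma> (colon scM Q') =
          frac scN (colon scM Q') (scN r m) s"
        using N.loc_smul_frac Q' W(4) by (auto simp: frac_on_def sec_smul_def)
    qed
    then show "\<exists>W s m. zopen scM W \<and> W \<subseteq> U \<and> Q \<in> W \<and>
        frac_on scM scN W m s (sec_smul scM scN U r \<gamma>)"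
      using W by blast
  qed
  then show ?thesis using U by (simp add: germ_reps_def)
qed

definition stalk_iso :: "('m set set \<times> ('r set \<Rightarrow> ('n \<times> 'r) set)) set \<Rightarrow> ('n \<times> 'r) set" where
  "stalk_iso a = snd (SOME x. x \<in> a) \<pp>"

lemma stalk_iso_class:
  assumes "c \<in> germ_reps scM scN P"
  shows "stalk_iso (germ_rel scM scN P `` {c}) = snd c \<pp>"
  unfolding stalk_iso_def
  using germ_rel_equiv assms germ_rel_value_eq by (rule congruent_some_equiv_class)

lemma some_germ_rep: "a \<in> stalk scM scN P \<Longrightarrow> (SOME x. x \<in> a) \<in> germ_reps scM scN P"
  unfolding stalk_def using germ_rel_equiv by (rule some_in_quotient_carrier)

lemma bij_betw_stalk_iso: "bij_betw stalk_iso (stalk scM scN P) (Loc scN \<pp>)"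
proof -
  have "bij_betw (\<lambda>a. snd (SOME x. x \<in> a) \<pp>) (stalk scM scN P) ((\<lambda>c. snd c \<pp>) ` germ_reps scM scN P)"
    unfolding stalk_def using germ_rel_equiv
  proof (rule bij_betw_quotient_choice)
    show "(c, d) \<in> germ_rel scM scN P \<longleftrightarrow> snd c \<pp> = snd d \<pp>"
      if "c \<in> germ_reps scM scN P" "d \<in> germ_reps scM scN P" for c d
      using that germ_rel_value_eq germ_rel_of_value_eq[of "fst c" "snd c" "fst d" "snd d"]
      by (metis prod.collapse)
  qed
  then show ?thesis by (simp add: stalk_iso_def[abs_def] germ_values)
qed

lemma stalk_iso_add:
  assumes a: "a \<in> stalk scM scN P" and b: "b \<in> stalk scM scN P"
  shows "stalk_iso (stalk_add scM scN P a b) = loc_add scN \<pp> (stalk_iso a) (stalk_iso b)"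
proof -
  obtain U \<gamma> V \<delta> where x: "(SOME x. x \<in> a) = (U, \<gamma>)" and y: "(SOME y. y \<in> b) = (V, \<delta>)"
    by fastforce
  have reps: "(U, \<gamma>) \<in> germ_reps scM scN P" "(V, \<delta>) \<in> germ_reps scM scN P"
    using some_germ_rep[OF a] some_germ_rep[OF b] x y by simp_all
  then have "\<pp> \<in> Supp scM (U \<inter> V)" by (simp add: germ_reps_def colon_mem_Supp)
  moreover have "stalk_iso (stalk_add scM scN P a b) =
      sec_add scM scN (U \<inter> V) (restr scM (U \<inter> V) \<gamma>) (restr scM (U \<inter> V) \<delta>) \<pp>"
    unfolding stalk_add_def x y Let_def using stalk_iso_class[OF germ_reps_add[OF reps]] by simp
  ultimately show ?thesis by (simp add: sec_add_def restr_def stalk_iso_def x y)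
qed

lemma stalk_iso_smul:
  assumes a: "a \<in> stalk scM scN P"
  shows "stalk_iso (stalk_smul scM scN P r a) = loc_smul scN \<pp> r (stalk_iso a)"
proof -
  obtain U \<gamma> where x: "(SOME x. x \<in> a) = (U, \<gamma>)" by fastforce
  have rep: "(U, \<gamma>) \<in> germ_reps scM scN P" using some_germ_rep[OF a] x by simp
  then have "\<pp> \<in> Supp scM U" by (simp add: germ_reps_def colon_mem_Supp)
  moreover have "stalk_iso (stalk_smul scM scN P r a) = sec_smul scM scN U r \<gamma> \<pp>"
    unfolding stalk_smul_def x Let_def using stalk_iso_class[OF germ_reps_smul[OF rep]] by simp
  ultimately show ?thesis by (simp add: sec_smul_def stalk_iso_def x)
qed

end

theorem proposition3p2:
  fixes scM :: "'r::comm_ring_1 \<Rightarrow> 'm::ab_group_add \<Rightarrow> 'm"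
    and scN :: "'r \<Rightarrow> 'n::ab_group_add \<Rightarrow> 'n"
    and P :: "'m set"
  assumes "module scM" and "module scN"
    and "Spec scM \<noteq> {}"
    and "P \<in> Spec scM"
  shows "\<exists>\<phi>. bij_betw \<phi> (stalk scM scN P) (Loc scN (colon scM P)) \<and>
    (\<forall>a \<in> stalk scM scN P. \<forall>b \<in> stalk scM scN P.
       \<phi> (stalk_add scM scN P a b) = loc_add scN (colon scM P) (\<phi> a) (\<phi> b)) \<and>
    (\<forall>r. \<forall>a \<in> stalk scM scN P.
       \<phi> (stalk_smul scM scN P r a) = loc_smul scN (colon scM P) r (\<phi> a))"
proof -
  interpret stalk_at_prime scM scN P
    using assms by (simp add: stalk_at_prime_def stalk_at_prime_axioms_def)
  show ?thesis
    using bij_betw_stalk_iso stalk_iso_add stalk_iso_smul by blast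
qed

end
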